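(* Let $(G,\cdot)$ be a WIPL with identity $e$, let $(H,\circ)$ be a WIPL with identity $e'$, and let $(A,B,C)$ be an isotopism from $(G,\cdot)$ to $(H,\circ)$. Put $a'=eA$ and $b'=eB$. Then $C$ is an isomorphism from $(G,\cdot)$ onto $(H,\circ)$ if and only if $(J_\rho' L_{b'}' J_\lambda',\ J_\lambda' R_{a'}' J_\rho',\ I)\in AUT(H,\circ)$. Moreover, when these equivalent conditions hold, $(J_\lambda' R_{a'}' J_\rho',\ J_\rho' L_{b'}' J_\lambda',\ R_{a'}'L_{b'}')\in AUT(H,\circ)$, and if in addition $y\circ y=e'$ for all $y\in H$, then $(R_{a'}',L_{b'}',R_{a'}'L_{b'}')\in AUT(H,\circ)$.
   Context: Maps are written on the right of their arguments ($xU$) and composed left to right: $UV$ means first apply $U$, then $V$; $I$ is the identity map. For a loop $(L,\cdot)$ with identity $e$, $x^\rho$ and $x^\lambda$ denote the right and left inverses of $x$ ($x x^\rho=e=x^\lambda x$), and $J_\rho:x\mapsto x^\rho$, $J_\lambda:x\mapsto x^\lambda$, $L_x:y\mapsto xy$, $R_x:y\mapsto yx$. For the loop $(H,\circ)$ with identity $e'$ the corresponding maps are denoted $J_\rho'$ ($y\mapsto y^{\rho'}$), $J_\lambda'$ ($y\mapsto y^{\lambda'}$), $L_y':z\mapsto y\circ z$, $R_y':z\mapsto z\circ y$. $L$ is a weak inverse property loop (WIPL) if $xy\cdot z=e$ implies $x\cdot yz=e$ for all $x,y,z\in L$. A triple $(U,V,W)$ of bijections $G\to H$ between loops $(G,\cdot)$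 and $(H,\circ)$ is an isotopism if $xU\circ yV=(x\cdot y)W$ for all $x,y\in G$; an autotopism is an isotopism of a loop to itself, and $AUT(H,\circ)$ denotes the group of autotopisms of $(H,\circ)$ under componentwise composition. *)

theory Defs
  imports Main
begin

text \<open>A loop is given by a carrier set, a binary operation and an identity element.
  Maps are represented as HOL functions; only their values on the carrier matter.\<close>

definition loop :: "'a set \<Rightarrow> ('a \<Rightarrow> 'a \<Rightarrow> 'a) \<Rightarrow> 'a \<Rightarrow> bool" where
  "loop L m e \<longleftrightarrow>
     e \<in> L \<and>
     (\<forall>x\<in>L. \<forall>y\<in>L. m x y \<in> L) \<and>
     (\<forall>x\<in>L. m e x = x \<and> m x e = x) \<and>
     (\<forall>a\<in>L. \<forall>b\<in>L. \<exists>!x. x \<in> L \<and> m a x = b) \<and>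
     (\<forall>a\<in>L. \<forall>b\<in>L. \<exists>!y. y \<in> L \<and> m y a = b)"

definition WIPL :: "'a set \<Rightarrow> ('a \<Rightarrow> 'a \<Rightarrow> 'a) \<Rightarrow> 'a \<Rightarrow> bool" where
  "WIPL L m e \<longleftrightarrow> loop L m e \<and>
     (\<forall>x\<in>L. \<forall>y\<in>L. \<forall>z\<in>L. m (m x y) z = e \<longrightarrow> m x (m y z) = e)"

text \<open>Right inverse: x x^rho = e; left inverse: x^lambda x = e.\<close>
definition rinv :: "'a set \<Rightarrow> ('a \<Rightarrow> 'a \<Rightarrow> 'a) \<Rightarrow> 'a \<Rightarrow> 'a \<Rightarrow> 'a" where
  "rinv L m e x = (THE y. y \<in> L \<and> m x y = e)"

definition linv :: "'a set \<Rightarrow> ('a \<Rightarrow> 'a \<Rightarrow> 'a) \<Rightarrow> 'a \<Rightarrow> 'a \<Rightarrow> 'a" where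
  "linv L m e x = (THE y. y \<in> L \<and> m y x = e)"

definition isotopism ::
  "'a set \<Rightarrow> ('a \<Rightarrow> 'a \<Rightarrow> 'a) \<Rightarrow> 'b set \<Rightarrow> ('b \<Rightarrow> 'b \<Rightarrow> 'b) \<Rightarrow>
   ('a \<Rightarrow> 'b) \<Rightarrow> ('a \<Rightarrow> 'b) \<Rightarrow> ('a \<Rightarrow> 'b) \<Rightarrow> bool" where
  "isotopism G m H n U V W \<longleftrightarrow>
     bij_betw U G H \<and> bij_betw V G H \<and> bij_betw W G H \<and>
     (\<forall>x\<in>G. \<forall>y\<in>G. n (U x) (V y) = W (m x y))"

definition autotopism ::
  "'b set \<Rightarrow> ('b \<Rightarrow> 'b \<Rightarrow> 'b) \<Rightarrow> ('b \<Rightarrow> 'b) \<Rightarrow> ('b \<Rightarrow> 'b) \<Rightarrow> ('b \<Rightarrow> 'b) \<Rightarrow> bool" where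
  "autotopism H n U V W \<longleftrightarrow> isotopism H n H n U V W"

definition loop_iso ::
  "'a set \<Rightarrow> ('a \<Rightarrow> 'a \<Rightarrow> 'a) \<Rightarrow> 'b set \<Rightarrow> ('b \<Rightarrow> 'b \<Rightarrow> 'b) \<Rightarrow> ('a \<Rightarrow> 'b) \<Rightarrow> bool" where
  "loop_iso G m H n C \<longleftrightarrow> bij_betw C G H \<and> (\<forall>x\<in>G. \<forall>y\<in>G. C (m x y) = n (C x) (C y))"

end

theory Submission
  imports Defs
begin

(* Write U = J_rho' L_b' J_lambda' and V = J_lambda' R_a' J_rho'.  The proof rests on one
   observation about weak inverse property loops: U is the inverse map of the right
   translation R_b', and V is the inverse map of the left translation L_a'.
   Since xA o b' = xC and a' o yB = yC, this gives A = CU and B = CV, so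
   (xy)C = xA o yB = xC U o yC V, and C is a homomorphism iff (U,V,I) is an autotopism.
   If (U,V,I) is an autotopism, then x o y = (x o b') o (a' o y); evaluating at the
   identity shows that L_a', L_b' and R_a', R_b' are mutually inverse, hence U = R_a',
   V = L_b' and (x o a') o (b' o y) = x o y.  The weak inverse property turns this
   identity into the middle associativity laws (b' o y) o z = b' o (y o z) and
   z o (y o a') = (z o y) o a', which yield the remaining autotopisms. *)

lemma autotopism_cong:
  assumes "\<And>x. x \<in> H \<Longrightarrow> U x = U' x" and "\<And>x. x \<in> H \<Longrightarrow> V x = V' x"
  shows "autotopism H n U V W \<longleftrightarrow> autotopism H n U' V' W"
proof -
  have "bij_betw U H H = bij_betw U' H H" "bij_betw V H H = bij_betw V' H H"
    using assms by (simp_all cong: bij_betw_cong)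
  then show ?thesis unfolding autotopism_def isotopism_def using assms by simp
qed

section \<open>Loops\<close>

locale loop_on =
  fixes L :: "'a set" and mult :: "'a \<Rightarrow> 'a \<Rightarrow> 'a" (infixl "\<cdot>" 70) and e :: 'a
  assumes loop: "loop L (\<cdot>) e"
begin

abbreviation rho :: "'a \<Rightarrow> 'a" where "rho x \<equiv> rinv L (\<cdot>) e x"
abbreviation lam :: "'a \<Rightarrow> 'a" where "lam x \<equiv> linv L (\<cdot>) e x"

lemma unit_closed: "e \<in> L"
  using loop by (simp add: loop_def)

lemma closed: "x \<in> L \<Longrightarrow> y \<in> L \<Longrightarrow> x \<cdot> y \<in> L"
  using loop by (simp add: loop_def)

lemma left_unit [simp]: "x \<in> L \<Longrightarrow> e \<cdot> x = x"
  using loop by (simp add: loop_def)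

lemma right_unit [simp]: "x \<in> L \<Longrightarrow> x \<cdot> e = x"
  using loop by (simp add: loop_def)

lemma left_division: "a \<in> L \<Longrightarrow> b \<in> L \<Longrightarrow> \<exists>!x. x \<in> L \<and> a \<cdot> x = b"
  using loop by (simp add: loop_def)

lemma right_division: "a \<in> L \<Longrightarrow> b \<in> L \<Longrightarrow> \<exists>!x. x \<in> L \<and> x \<cdot> a = b"
  using loop by (simp add: loop_def)

lemma left_cancel:
  assumes "a \<in> L" "x \<in> L" "y \<in> L" "a \<cdot> x = a \<cdot> y" shows "x = y"
proof -
  have "\<exists>!z. z \<in> L \<and> a \<cdot> z = a \<cdot> x" using left_division[OF assms(1) closed[OF assms(1,2)]] .
  then show ?thesis using assms(2-4) by (auto elim: ex1E)
qed

lemma right_cancel: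
  assumes "a \<in> L" "x \<in> L" "y \<in> L" "x \<cdot> a = y \<cdot> a" shows "x = y"
proof -
  have "\<exists>!z. z \<in> L \<and> z \<cdot> a = x \<cdot> a" using right_division[OF assms(1) closed[OF assms(2,1)]] .
  then show ?thesis using assms(2-4) by (auto elim: ex1E)
qed

lemma rinv: "x \<in> L \<Longrightarrow> rho x \<in> L \<and> x \<cdot> rho x = e"
  unfolding rinv_def by (rule theI') (rule left_division[OF _ unit_closed])

lemma linv: "x \<in> L \<Longrightarrow> lam x \<in> L \<and> lam x \<cdot> x = e"
  unfolding linv_def by (rule theI') (rule right_division[OF _ unit_closed])

lemma rinv_unique: "x \<in> L \<Longrightarrow> y \<in> L \<Longrightarrow> x \<cdot> y = e \<Longrightarrow> rho x = y"
  using rinv left_cancel by metis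

lemma bij_left_mult:
  assumes a: "a \<in> L" shows "bij_betw (\<lambda>x. a \<cdot> x) L L"
proof (rule bij_betw_imageI)
  show "inj_on (\<lambda>x. a \<cdot> x) L" using left_cancel[OF a] by (auto simp: inj_on_def)
  have "y \<in> (\<lambda>x. a \<cdot> x) ` L" if "y \<in> L" for y
    using left_division[OF a that] by blast
  then show "(\<lambda>x. a \<cdot> x) ` L = L" using closed[OF a] by blast
qed

lemma bij_right_mult:
  assumes a: "a \<in> L" shows "bij_betw (\<lambda>x. x \<cdot> a) L L"
proof (rule bij_betw_imageI)
  show "inj_on (\<lambda>x. x \<cdot> a) L" using right_cancel[OF a] by (auto simp: inj_on_def)
  have "y \<in> (\<lambda>x. x \<cdot> a) ` L" if "y \<in> L" for y
    using right_division[OF a that] by blast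
  then show "(\<lambda>x. x \<cdot> a) ` L = L" using closed[OF _ a] by blast
qed

lemma bij_two_sided_mult: "a \<in> L \<Longrightarrow> b \<in> L \<Longrightarrow> bij_betw (\<lambda>x. b \<cdot> (x \<cdot> a)) L L"
  using bij_betw_trans[OF bij_right_mult bij_left_mult] by (simp add: comp_def)

lemma translations_inverse:
  assumes a: "a \<in> L" and b: "b \<in> L"
    and split: "\<forall>x\<in>L. \<forall>y\<in>L. x \<cdot> y = (x \<cdot> b) \<cdot> (a \<cdot> y)"
  shows "\<And>y. y \<in> L \<Longrightarrow> a \<cdot> (b \<cdot> y) = y"
    and "\<And>x. x \<in> L \<Longrightarrow> (x \<cdot> a) \<cdot> b = x"
proof -
  have ba: "\<And>y. y \<in> L \<Longrightarrow> b \<cdot> (a \<cdot> y) = y"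
    using split[rule_format, OF unit_closed] b by simp
  have ab: "\<And>x. x \<in> L \<Longrightarrow> (x \<cdot> b) \<cdot> a = x"
    using split[rule_format, OF _ unit_closed] a by simp
  show "a \<cdot> (b \<cdot> y) = y" if "y \<in> L" for y
  proof -
    obtain w where "w \<in> L" "a \<cdot> w = y" using left_division[OF a \<open>y \<in> L\<close>] by blast
    with ba show ?thesis by auto
  qed
  show "(x \<cdot> a) \<cdot> b = x" if "x \<in> L" for x
  proof -
    obtain w where "w \<in> L" "w \<cdot> b = x" using right_division[OF b \<open>x \<in> L\<close>] by blast
    with ab show ?thesis by auto
  qed
qed

lemma isotopism_at_unit:
  assumes G: "loop G m e0" and iso: "isotopism G m L (\<cdot>) A B C" and x: "x \<in> G"
  shows "A x \<cdot> B e0 = C x" and "A e0 \<cdot> B x = C x"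
proof -
  have e0: "e0 \<in> G" "m x e0 = x" "m e0 x = x" using G x by (auto simp: loop_def)
  from iso have "\<And>x y. x \<in> G \<Longrightarrow> y \<in> G \<Longrightarrow> A x \<cdot> B y = C (m x y)"
    unfolding isotopism_def by blast
  from this[OF x e0(1)] this[OF e0(1) x] e0 show "A x \<cdot> B e0 = C x" "A e0 \<cdot> B x = C x"
    by simp_all
qed

end

section \<open>Weak inverse property loops\<close>

locale wipl_on = loop_on +
  assumes weak_inverse:
    "\<And>x y z. x \<in> L \<Longrightarrow> y \<in> L \<Longrightarrow> z \<in> L \<Longrightarrow> (x \<cdot> y) \<cdot> z = e \<Longrightarrow> x \<cdot> (y \<cdot> z) = e"

lemma WIPL_imp_wipl_on: "WIPL L m e \<Longrightarrow> wipl_on L m e"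
  by (simp add: WIPL_def wipl_on_def wipl_on_axioms_def loop_on_def)

context wipl_on
begin

lemma weak_inverse_rev:
  assumes x: "x \<in> L" and y: "y \<in> L" and z: "z \<in> L" and xyz: "x \<cdot> (y \<cdot> z) = e"
  shows "(x \<cdot> y) \<cdot> z = e"
proof -
  define w where "w = rho (x \<cdot> y)"
  have w: "w \<in> L" "(x \<cdot> y) \<cdot> w = e" using rinv[OF closed[OF x y]] by (simp_all add: w_def)
  have "rho x = y \<cdot> w" using rinv_unique[OF x closed[OF y w(1)] weak_inverse[OF x y w]] .
  moreover have "rho x = y \<cdot> z" using rinv_unique[OF x closed[OF y z] xyz] .
  ultimately have "w = z" using left_cancel[OF y w(1) z] by simp
  with w show ?thesis by simp
qed

text \<open>The maps \<open>J_rho L_b J_lambda\<close> and \<open>J_lambda R_a J_rho\<close> of the theorem; the lemmas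
  below show that they are the inverses of \<open>R_b\<close> and \<open>L_a\<close>.\<close>

abbreviation unR :: "'a \<Rightarrow> 'a \<Rightarrow> 'a" where "unR b x \<equiv> lam (b \<cdot> rho x)"
abbreviation unL :: "'a \<Rightarrow> 'a \<Rightarrow> 'a" where "unL a x \<equiv> rho (lam x \<cdot> a)"

lemma unR_closed: "b \<in> L \<Longrightarrow> x \<in> L \<Longrightarrow> unR b x \<in> L"
  using linv[OF closed[OF _ conjunct1[OF rinv]]] by blast

lemma unL_closed: "a \<in> L \<Longrightarrow> x \<in> L \<Longrightarrow> unL a x \<in> L"
  using rinv[OF closed[OF conjunct1[OF linv]]] by blast

lemma unR_mult: assumes b: "b \<in> L" and x: "x \<in> L" shows "unR b x \<cdot> b = x"
proof -
  have r: "rho x \<in> L" "x \<cdot> rho x = e" using rinv[OF x] by simp_all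
  have "unR b x \<cdot> (b \<cdot> rho x) = e" using linv[OF closed[OF b r(1)]] by simp
  then have "(unR b x \<cdot> b) \<cdot> rho x = x \<cdot> rho x"
    using weak_inverse_rev[OF unR_closed[OF b x] b r(1)] r(2) by simp
  then show ?thesis using right_cancel[OF r(1) closed[OF unR_closed[OF b x] b] x] by simp
qed

lemma mult_unL: assumes a: "a \<in> L" and x: "x \<in> L" shows "a \<cdot> unL a x = x"
proof -
  have l: "lam x \<in> L" "lam x \<cdot> x = e" using linv[OF x] by simp_all
  have "(lam x \<cdot> a) \<cdot> unL a x = e" using rinv[OF closed[OF l(1) a]] by simp
  then have "lam x \<cdot> (a \<cdot> unL a x) = lam x \<cdot> x"
    using weak_inverse[OF l(1) a unL_closed[OF a x]] l(2) by simp
  then show ?thesis using left_cancel[OF l(1) closed[OF a unL_closed[OF a x]] x] by simp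
qed

lemma unR_eqI: assumes b: "b \<in> L" and y: "y \<in> L" and "y \<cdot> b = x" shows "unR b x = y"
proof -
  have yb: "y \<cdot> b \<in> L" using closed[OF y b] .
  have "unR b (y \<cdot> b) = y" using right_cancel[OF b unR_closed[OF b yb] y unR_mult[OF b yb]] .
  with \<open>y \<cdot> b = x\<close> show ?thesis by simp
qed

lemma unL_eqI: assumes a: "a \<in> L" and y: "y \<in> L" and "a \<cdot> y = x" shows "unL a x = y"
proof -
  have ay: "a \<cdot> y \<in> L" using closed[OF a y] .
  have "unL a (a \<cdot> y) = y" using left_cancel[OF a unL_closed[OF a ay] y mult_unL[OF a ay]] .
  with \<open>a \<cdot> y = x\<close> show ?thesis by simp
qed

lemma bij_unR: "b \<in> L \<Longrightarrow> bij_betw (unR b) L L"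
  by (rule bij_betw_byWitness[where f' = "\<lambda>x. x \<cdot> b"])
     (auto simp: unR_mult unR_eqI unR_closed closed)

lemma bij_unL: "a \<in> L \<Longrightarrow> bij_betw (unL a) L L"
  by (rule bij_betw_byWitness[where f' = "\<lambda>x. a \<cdot> x"])
     (auto simp: mult_unL unL_eqI unL_closed closed)

text \<open>First part of the theorem: the third component of an isotopism onto a WIPL
  factors the first two through \<open>R_b\<^sup>-\<^sup>1\<close> and \<open>L_a\<^sup>-\<^sup>1\<close>, so it is an isomorphism exactly
  when \<open>(R_b\<^sup>-\<^sup>1, L_a\<^sup>-\<^sup>1, I)\<close> is an autotopism.\<close>

lemma loop_iso_iff_autotopism:
  assumes G: "loop G m e0" and iso: "isotopism G m L (\<cdot>) A B C"
  shows "loop_iso G m L (\<cdot>) C \<longleftrightarrow> autotopism L (\<cdot>) (unR (B e0)) (unL (A e0)) (\<lambda>x. x)"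
proof -
  have e0: "e0 \<in> G" using G by (simp add: loop_def)
  have bijA: "bij_betw A G L" and bijB: "bij_betw B G L" and bijC: "bij_betw C G L"
    and prod: "\<And>x y. x \<in> G \<Longrightarrow> y \<in> G \<Longrightarrow> A x \<cdot> B y = C (m x y)"
    using iso unfolding isotopism_def by blast+
  have a: "A e0 \<in> L" and b: "B e0 \<in> L" using bijA bijB e0 by (simp_all add: bij_betw_apply)
  have hom: "C (m x y) = unR (B e0) (C x) \<cdot> unL (A e0) (C y)" if x: "x \<in> G" and y: "y \<in> G" for x y
  proof -
    have "A x = unR (B e0) (C x)"
      using unR_eqI[OF b bij_betw_apply[OF bijA x] isotopism_at_unit(1)[OF G iso x]] by simp
    moreover have "B y = unL (A e0) (C y)"
      using unL_eqI[OF a bij_betw_apply[OF bijB y] isotopism_at_unit(2)[OF G iso y]] by simp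
    ultimately show ?thesis using prod[OF x y] by simp
  qed
  have "(\<forall>x\<in>G. \<forall>y\<in>G. C (m x y) = C x \<cdot> C y) \<longleftrightarrow>
        (\<forall>x\<in>C ` G. \<forall>y\<in>C ` G. unR (B e0) x \<cdot> unL (A e0) y = x \<cdot> y)"
    using hom by simp
  then show ?thesis
    unfolding loop_iso_def autotopism_def isotopism_def bij_betw_imp_surj_on[OF bijC]
    using bijC bij_unR[OF b] bij_unL[OF a] by (simp add: bij_betw_def)
qed

lemma autotopism_inverse_translations:
  assumes a: "a \<in> L" and b: "b \<in> L"
    and aut: "autotopism L (\<cdot>) (unR b) (unL a) (\<lambda>x. x)"
  shows "\<And>x. x \<in> L \<Longrightarrow> unR b x = x \<cdot> a" and "\<And>y. y \<in> L \<Longrightarrow> unL a y = b \<cdot> y"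
proof -
  have P: "\<And>x y. x \<in> L \<Longrightarrow> y \<in> L \<Longrightarrow> unR b x \<cdot> unL a y = x \<cdot> y"
    using aut unfolding autotopism_def isotopism_def by blast
  have factor: "\<forall>x\<in>L. \<forall>y\<in>L. x \<cdot> y = (x \<cdot> b) \<cdot> (a \<cdot> y)"
  proof (intro ballI)
    fix x y assume "x \<in> L" "y \<in> L"
    then show "x \<cdot> y = (x \<cdot> b) \<cdot> (a \<cdot> y)"
      using P[OF closed[OF \<open>x \<in> L\<close> b] closed[OF a \<open>y \<in> L\<close>]] a b by (simp add: unR_eqI unL_eqI)
  qed
  note inv = translations_inverse[OF a b factor]
  show "unR b x = x \<cdot> a" if "x \<in> L" for x
    using unR_eqI[OF b closed[OF that a] inv(2)[OF that]] .
  show "unL a y = b \<cdot> y" if "y \<in> L" for y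
    using unL_eqI[OF a closed[OF b that] inv(1)[OF that]] .
qed

lemma middle_associative:
  assumes a: "a \<in> L" and b: "b \<in> L"
    and twist: "\<forall>x\<in>L. \<forall>y\<in>L. (x \<cdot> a) \<cdot> (b \<cdot> y) = x \<cdot> y"
  shows "\<And>y z. y \<in> L \<Longrightarrow> z \<in> L \<Longrightarrow> (b \<cdot> y) \<cdot> z = b \<cdot> (y \<cdot> z)"
    and "\<And>y z. y \<in> L \<Longrightarrow> z \<in> L \<Longrightarrow> z \<cdot> (y \<cdot> a) = (z \<cdot> y) \<cdot> a"
proof -
  show "(b \<cdot> y) \<cdot> z = b \<cdot> (y \<cdot> z)" if y: "y \<in> L" and z: "z \<in> L" for y z
  proof -
    define x where "x = lam (y \<cdot> z)"
    have x: "x \<in> L" "x \<cdot> (y \<cdot> z) = e" using linv[OF closed[OF y z]] by (simp_all add: x_def)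
    have "((x \<cdot> a) \<cdot> (b \<cdot> y)) \<cdot> z = e"
      using weak_inverse_rev[OF x(1) y z x(2)] twist[rule_format, OF x(1) y] by simp
    then have "(x \<cdot> a) \<cdot> ((b \<cdot> y) \<cdot> z) = (x \<cdot> a) \<cdot> (b \<cdot> (y \<cdot> z))"
      using weak_inverse[OF closed[OF x(1) a] closed[OF b y] z]
        twist[rule_format, OF x(1) closed[OF y z]] x(2)
      by simp
    then show ?thesis
      using left_cancel[OF closed[OF x(1) a] closed[OF closed[OF b y] z] closed[OF b closed[OF y z]]]
      by simp
  qed
  show "z \<cdot> (y \<cdot> a) = (z \<cdot> y) \<cdot> a" if y: "y \<in> L" and z: "z \<in> L" for y z
  proof -
    define x where "x = rho (z \<cdot> y)"
    have x: "x \<in> L" "(z \<cdot> y) \<cdot> x = e" using rinv[OF closed[OF z y]] by (simp_all add: x_def)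
    have "z \<cdot> ((y \<cdot> a) \<cdot> (b \<cdot> x)) = e"
      using weak_inverse[OF z y x(1) x(2)] twist[rule_format, OF y x(1)] by simp
    then have "(z \<cdot> (y \<cdot> a)) \<cdot> (b \<cdot> x) = ((z \<cdot> y) \<cdot> a) \<cdot> (b \<cdot> x)"
      using weak_inverse_rev[OF z closed[OF y a] closed[OF b x(1)]]
        twist[rule_format, OF closed[OF z y] x(1)] x(2)
      by simp
    then show ?thesis
      using right_cancel[OF closed[OF b x(1)] closed[OF z closed[OF y a]] closed[OF closed[OF z y] a]]
      by simp
  qed
qed

lemma autotopism_left_right:
  assumes a: "a \<in> L" and b: "b \<in> L"
    and twist: "\<forall>x\<in>L. \<forall>y\<in>L. (x \<cdot> a) \<cdot> (b \<cdot> y) = x \<cdot> y"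
  shows "autotopism L (\<cdot>) (\<lambda>x. b \<cdot> x) (\<lambda>x. x \<cdot> a) (\<lambda>x. b \<cdot> (x \<cdot> a))"
proof -
  note assoc = middle_associative[OF a b twist]
  show ?thesis unfolding autotopism_def isotopism_def
  proof (intro conjI ballI)
    fix x y assume x: "x \<in> L" and y: "y \<in> L"
    have "(b \<cdot> x) \<cdot> (y \<cdot> a) = b \<cdot> (x \<cdot> (y \<cdot> a))" using assoc(1)[OF x closed[OF y a]] .
    also have "\<dots> = b \<cdot> ((x \<cdot> y) \<cdot> a)" using assoc(2)[OF y x] by (rule arg_cong)
    finally show "(b \<cdot> x) \<cdot> (y \<cdot> a) = b \<cdot> ((x \<cdot> y) \<cdot> a)" .
  qed (use bij_left_mult[OF b] bij_right_mult[OF a] bij_two_sided_mult[OF a b] in simp_all)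
qed

text \<open>Here \<open>a b = e = a a\<close> gives \<open>b = a\<close>, and the weak inverse property gives \<open>a (t a) = t\<close>.\<close>

lemma autotopism_right_left_exponent_two:
  assumes a: "a \<in> L" and b: "b \<in> L"
    and twist: "\<forall>x\<in>L. \<forall>y\<in>L. (x \<cdot> a) \<cdot> (b \<cdot> y) = x \<cdot> y"
    and sq: "\<forall>y\<in>L. y \<cdot> y = e"
  shows "autotopism L (\<cdot>) (\<lambda>x. x \<cdot> a) (\<lambda>x. b \<cdot> x) (\<lambda>x. b \<cdot> (x \<cdot> a))"
proof -
  have "a \<cdot> b = e" using twist[rule_format, OF unit_closed unit_closed] a b unit_closed by simp
  also have "e = a \<cdot> a" using sq a by simp
  finally have ba: "b = a" by (rule left_cancel[OF a b a])
  have absorb: "a \<cdot> (t \<cdot> a) = t" if t: "t \<in> L" for t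
  proof -
    have "t \<cdot> (a \<cdot> (t \<cdot> a)) = e"
      using weak_inverse[OF t a closed[OF t a]] sq closed[OF t a] by simp
    then show ?thesis
      using left_cancel[OF t closed[OF a closed[OF t a]] t] sq t by simp
  qed
  show ?thesis unfolding autotopism_def isotopism_def
  proof (intro conjI ballI)
    fix x y assume x: "x \<in> L" and y: "y \<in> L"
    have "(x \<cdot> a) \<cdot> (b \<cdot> y) = x \<cdot> y" using twist[rule_format, OF x y] .
    also have "\<dots> = b \<cdot> ((x \<cdot> y) \<cdot> a)" using absorb[OF closed[OF x y]] ba by simp
    finally show "(x \<cdot> a) \<cdot> (b \<cdot> y) = b \<cdot> ((x \<cdot> y) \<cdot> a)" .
  qed (use bij_left_mult[OF b] bij_right_mult[OF a] bij_two_sided_mult[OF a b] in simp_all)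
qed

end

theorem mainTheorem3:
  fixes G :: "'a set" and m :: "'a \<Rightarrow> 'a \<Rightarrow> 'a" and e :: 'a
    and H :: "'b set" and n :: "'b \<Rightarrow> 'b \<Rightarrow> 'b" and e' :: 'b
    and A B C :: "'a \<Rightarrow> 'b"
  assumes "WIPL G m e" and "WIPL H n e'"
    and "isotopism G m H n A B C"
  defines "a' \<equiv> A e" and "b' \<equiv> B e"
  shows "(loop_iso G m H n C \<longleftrightarrow>
           autotopism H n (\<lambda>x. linv H n e' (n b' (rinv H n e' x)))
                          (\<lambda>x. rinv H n e' (n (linv H n e' x) a'))
                          (\<lambda>x. x))
      \<and> (loop_iso G m H n C \<longrightarrow>
           autotopism H n (\<lambda>x. rinv H n e' (n (linv H n e' x) a'))
                          (\<lambda>x. linv H n e' (n b' (rinv H n e' x)))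
                          (\<lambda>x. n b' (n x a'))
           \<and> ((\<forall>y\<in>H. n y y = e') \<longrightarrow>
                autotopism H n (\<lambda>x. n x a') (\<lambda>x. n b' x) (\<lambda>x. n b' (n x a'))))"
proof -
  interpret H: wipl_on H n e' using assms(2) by (rule WIPL_imp_wipl_on)
  have G: "loop G m e" using assms(1) by (simp add: WIPL_def)
  have e: "e \<in> G" using G by (simp add: loop_def)
  have "bij_betw A G H" "bij_betw B G H" using assms(3) by (simp_all add: isotopism_def)
  then have a': "a' \<in> H" and b': "b' \<in> H"
    unfolding a'_def b'_def by (simp_all add: bij_betw_apply[OF _ e])
  have part1: "loop_iso G m H n C \<longleftrightarrow> autotopism H n (H.unR b') (H.unL a') (\<lambda>x. x)"
    using H.loop_iso_iff_autotopism[OF G assms(3)] by (simp add: a'_def b'_def)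
  moreover have "autotopism H n (H.unL a') (H.unR b') (\<lambda>x. n b' (n x a'))
      \<and> ((\<forall>y\<in>H. n y y = e') \<longrightarrow> autotopism H n (\<lambda>x. n x a') (\<lambda>x. n b' x) (\<lambda>x. n b' (n x a')))"
    if "loop_iso G m H n C"
  proof -
    have aut: "autotopism H n (H.unR b') (H.unL a') (\<lambda>x. x)" using part1 that by simp
    note transl = H.autotopism_inverse_translations[OF a' b' aut]
    have cong: "autotopism H n (H.unR b') (H.unL a') W \<longleftrightarrow> autotopism H n (\<lambda>x. n x a') (\<lambda>x. n b' x) W"
      "autotopism H n (H.unL a') (H.unR b') W \<longleftrightarrow> autotopism H n (\<lambda>x. n b' x) (\<lambda>x. n x a') W"
      for W by (rule autotopism_cong; simp add: transl)+
    have twist: "\<forall>x\<in>H. \<forall>y\<in>H. n (n x a') (n b' y) = n x y"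
      using aut[unfolded cong(1)] unfolding autotopism_def isotopism_def by blast
    have "autotopism H n (H.unL a') (H.unR b') (\<lambda>x. n b' (n x a'))"
      unfolding cong(2) by (rule H.autotopism_left_right[OF a' b' twist])
    then show ?thesis using H.autotopism_right_left_exponent_two[OF a' b' twist] by blast
  qed
  ultimately show ?thesis by blast
qed

end
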